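(* Let $s$ be even, $n\ge1$, let $A_1,\ldots,A_{s/2}\in\mathbb{R}^{n\times n}$ be symmetric matrices, let $h>0$, and let $U:\mathbb{R}^n\to\mathbb{R}$ be a potential. For $T>0$ let $\mathbb{T}$ be either the circle $\mathbb{R}/T\mathbb{Z}$ or the real line $\mathbb{R}$. For $y$ defined on $\mathbb{T}$ consider \[S_\Delta(y)=\int_{\mathbb{T}}L_\Delta\big(y(t),y(t+h),\ldots,y(t+\tfrac{s}{2}h)\big)\,\mathrm{d}t,\] \[L_\Delta\big(y(t),\ldots,y(t+\tfrac s2 h)\big)=\frac{1}{2h^2}\sum_{j=1}^{s/2}\langle A_j(y(t+jh)-y(t)),\,y(t+jh)-y(t)\rangle+U(y(t)).\] Then the variational principle $\delta S_\Delta=0$ (stationarity with respect to all variations $\delta y\in C^\infty_c(\mathbb{T},\mathbb{R}^n)$) implies the functional equation \[\sum_{j=1}^{s/2}A_j\big(y(t-jh)-2y(t)+y(t+jh)\big)=h^2\nabla U(y(t))\] on $\mathbb{T}$. Moreover, if $\mathbb{T}=[a,b]$ is an interval, then $\delta S_\Delta=0$ (with respect to variations $\delta y\in C^\infty_c([a+\frac s2 h,b-\frac s2 h],\mathbb{R}^n)$) implies this functional equation on the interval $[a+\frac s2 h,\,b-\frac s2 h]$. Here it is assumed that the function space for $y$ and the potential $U$ are such that $U\circ y$ and $\nabla U\circ y$ are square integrable.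
   Context: The variational derivative is $\delta S_\Delta(y)=\lim_{\epsilon\to0}\frac1\epsilon\big(S_\Delta(y+\epsilon\,\delta y)-S_\Delta(y)\big)$. *)

theory Defs
  imports "HOL-Analysis.Analysis"
begin

definition smooth_fun :: "(real \<Rightarrow> 'a::real_normed_vector) \<Rightarrow> bool" where
  "smooth_fun f \<longleftrightarrow>
     (\<exists>D. D 0 = f \<and> (\<forall>k t. (D k has_vector_derivative D (Suc k) t) (at t)))"

definition LDelta ::
  "nat \<Rightarrow> (nat \<Rightarrow> real^'n^'n) \<Rightarrow> real \<Rightarrow> (real^'n \<Rightarrow> real) \<Rightarrow> (real \<Rightarrow> real^'n) \<Rightarrow> real \<Rightarrow> real"
  where
  "LDelta s A h U y t =
     1 / (2 * h^2) * (\<Sum>j = 1..s div 2.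
        (A j *v (y (t + real j * h) - y t)) \<bullet> (y (t + real j * h) - y t))
     + U (y t)"

text \<open>Action on the circle R/TZ (y T-periodic): integral over one period.\<close>
definition S_circle ::
  "nat \<Rightarrow> (nat \<Rightarrow> real^'n^'n) \<Rightarrow> real \<Rightarrow> (real^'n \<Rightarrow> real) \<Rightarrow> real \<Rightarrow> (real \<Rightarrow> real^'n) \<Rightarrow> real"
  where "S_circle s A h U T y = integral {0..T} (LDelta s A h U y)"

text \<open>On the real line S_Delta(y) itself may diverge; the difference
  S_Delta(y + e dy) - S_Delta(y) is understood as the integral of the difference
  of the Lagrangians (which is compactly supported for compactly supported dy).\<close>
definition S_line_diff ::
  "nat \<Rightarrow> (nat \<Rightarrow> real^'n^'n) \<Rightarrow> real \<Rightarrow> (real^'n \<Rightarrow> real) \<Rightarrow> (real \<Rightarrow> real^'n) \<Rightarrow> (real \<Rightarrow> real^'n) \<Rightarrow> real"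
  where "S_line_diff s A h U y z = integral UNIV (\<lambda>t. LDelta s A h U z t - LDelta s A h U y t)"

text \<open>Action on an interval [a,b]: L_Delta at t needs y on [t, t + (s/2) h],
  so t ranges over [a, b - (s/2) h].\<close>
definition S_interval ::
  "nat \<Rightarrow> (nat \<Rightarrow> real^'n^'n) \<Rightarrow> real \<Rightarrow> (real^'n \<Rightarrow> real) \<Rightarrow> real \<Rightarrow> real \<Rightarrow> (real \<Rightarrow> real^'n) \<Rightarrow> real"
  where "S_interval s A h U a b y = integral {a..b - real (s div 2) * h} (LDelta s A h U y)"

end

(*
  Differentiating the action along y + e dy under the integral sign gives the first variation
    integral of  h^-2 sum_j <A_j (y(t + j h) - y t), dy(t + j h) - dy t> + <grad U (y t), dy t>,
  where symmetry of A_j is used to differentiate the quadratic form. Shifting the terms that contain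
  dy(t + j h) back by j h, which is harmless when dy is periodic or supported well inside the window,
  is a discrete summation by parts; it turns the first variation into the integral of <r t, dy t> with
  the residual r t = grad U (y t) - h^-2 sum_j A_j (y(t - j h) - 2 y t + y(t + j h)). Testing with
  dy = psi v for nonnegative smooth bumps psi concentrated near a point (exp(-1/x) composed with a
  quadratic, or with a cosine on the circle) forces the continuous residual to vanish there.
  On an interval, y is first extended to the whole line by constants, which changes neither the
  action nor the residual on [a + (s/2) h, b - (s/2) h].
*)

theory Submission
  imports Defs "HOL-Library.Periodic_Fun"
begin

definition flat :: "nat \<Rightarrow> real \<Rightarrow> real" where
  "flat m x = (if x > 0 then exp (- 1 / x) / x ^ m else 0)"

lemma flat_nonneg: "flat m x \<ge> 0"
  by (simp add: flat_def)

lemma flat_pos: "x > 0 \<Longrightarrow> flat m x > 0"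
  by (simp add: flat_def)

lemma flat_eq_0: "x \<le> 0 \<Longrightarrow> flat m x = 0"
  by (simp add: flat_def)

lemma tendsto_flat_at_right_0: "(flat m \<longlongrightarrow> 0) (at_right 0)"
proof -
  have "((\<lambda>u. u ^ m / exp u) \<longlongrightarrow> (0::real)) at_top"
    by (rule tendsto_power_div_exp_0)
  moreover have "\<forall>\<^sub>F u in at_top. u ^ m / exp u = flat m (inverse u)"
    using eventually_gt_at_top[of 0]
    by eventually_elim (simp add: flat_def exp_minus field_simps)
  ultimately have "((\<lambda>u. flat m (inverse u)) \<longlongrightarrow> 0) at_top"
    using tendsto_cong by fastforce
  then show ?thesis
    by (simp add: filterlim_at_right_to_top)
qed

lemma has_real_derivative_flat:
  "(flat m has_real_derivative flat (m + 2) x - real m * flat (m + 1) x) (at x)"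
proof (cases "x > 0")
  case True
  have "((\<lambda>x. exp (- 1 / x) / x ^ m) has_real_derivative flat (m + 2) x - real m * flat (m + 1) x) (at x)"
    using True
    by (auto intro!: derivative_eq_intros simp: flat_def field_simps power2_eq_square)
      (cases m; simp)
  then show ?thesis
    by (rule has_field_derivative_transform_within_open[of _ _ _ "{0<..}"])
      (use True in \<open>auto simp: flat_def\<close>)
next
  case False
  show ?thesis
  proof (cases "x < 0")
    case True
    have "(flat m has_real_derivative 0) (at x)"
      by (rule has_field_derivative_transform_within_open[of "\<lambda>_. 0" _ _ "{..<0}"])
        (use True in \<open>auto simp: flat_def\<close>)
    then show ?thesis
      using True by (simp add: flat_def)
  next
    case False
    with \<open>\<not> x > 0\<close> have x: "x = 0" by simp
    have "((\<lambda>y. (flat m y - flat m 0) / (y - 0)) \<longlongrightarrow> 0) (at 0)"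
    proof (rule filterlim_split_at_real)
      show "((\<lambda>y. (flat m y - flat m 0) / (y - 0)) \<longlongrightarrow> 0) (at_left 0)"
        by (rule tendsto_eventually)
          (auto simp: eventually_at_left_field flat_def intro!: exI[of _ "-1"])
      have "\<forall>\<^sub>F y in at_right 0. flat (m + 1) y = (flat m y - flat m 0) / (y - 0)"
        by (auto simp: eventually_at_right_field flat_def intro!: exI[of _ 1])
      then show "((\<lambda>y. (flat m y - flat m 0) / (y - 0)) \<longlongrightarrow> 0) (at_right 0)"
        using tendsto_flat_at_right_0[of "m + 1"] tendsto_cong by fastforce
    qed
    then show ?thesis
      using x by (simp add: has_field_derivative_iff flat_def)
  qed
qed

text \<open>Smoothness is proved by exhibiting a function algebra that contains the function and is
  closed under differentiation; for \<open>flat 0 \<circ> q\<close> the algebra is generated by all \<open>flat m \<circ> q\<close>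
  together with functions generating \<open>q'\<close>.\<close>

inductive_set fun_algebra :: "(real \<Rightarrow> real) set \<Rightarrow> (real \<Rightarrow> real) set" for Gs where
  gen: "g \<in> Gs \<Longrightarrow> g \<in> fun_algebra Gs"
| const: "(\<lambda>_. c) \<in> fun_algebra Gs"
| add: "f \<in> fun_algebra Gs \<Longrightarrow> g \<in> fun_algebra Gs \<Longrightarrow> (\<lambda>x. f x + g x) \<in> fun_algebra Gs"
| mult: "f \<in> fun_algebra Gs \<Longrightarrow> g \<in> fun_algebra Gs \<Longrightarrow> (\<lambda>x. f x * g x) \<in> fun_algebra Gs"

lemma fun_algebra_mono: "Gs \<subseteq> Hs \<Longrightarrow> fun_algebra Gs \<subseteq> fun_algebra Hs"
proof
  show "f \<in> fun_algebra Hs" if "Gs \<subseteq> Hs" "f \<in> fun_algebra Gs" for f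
    using that(2,1) by induction (auto intro: fun_algebra.intros)
qed

definition derivatives_in :: "(real \<Rightarrow> real) set \<Rightarrow> (real \<Rightarrow> real) set \<Rightarrow> bool" where
  "derivatives_in F Gs \<longleftrightarrow> (\<forall>g\<in>Gs. \<exists>g'\<in>F. \<forall>x. (g has_real_derivative g' x) (at x))"

lemma derivatives_in_fun_algebra:
  assumes "derivatives_in (fun_algebra Gs) Gs"
  shows "derivatives_in (fun_algebra Gs) (fun_algebra Gs)"
  unfolding derivatives_in_def
proof
  fix f assume "f \<in> fun_algebra Gs"
  then show "\<exists>f'\<in>fun_algebra Gs. \<forall>x. (f has_real_derivative f' x) (at x)"
  proof induction
    case (gen g)
    then show ?case
      using assms by (auto simp: derivatives_in_def)
  next
    case (const c)
    show ?case
      by (auto intro!: bexI[of _ "\<lambda>_. 0"] fun_algebra.const)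
  next
    case (add f g)
    then obtain f' g' where "f' \<in> fun_algebra Gs" "\<forall>x. (f has_real_derivative f' x) (at x)"
      and "g' \<in> fun_algebra Gs" "\<forall>x. (g has_real_derivative g' x) (at x)"
      by blast
    then show ?case
      by (intro bexI[of _ "\<lambda>x. f' x + g' x"]) (auto intro: fun_algebra.add derivative_intros)
  next
    case (mult f g)
    then obtain f' g' where "f' \<in> fun_algebra Gs" "\<forall>x. (f has_real_derivative f' x) (at x)"
      and "g' \<in> fun_algebra Gs" "\<forall>x. (g has_real_derivative g' x) (at x)"
      by blast
    then show ?case
      by (intro bexI[of _ "\<lambda>x. f' x * g x + f x * g' x"])
        (auto intro!: derivative_eq_intros fun_algebra.add fun_algebra.mult mult.hyps)
  qed
qed

lemma smooth_fun_if_derivatives_in: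
  assumes F: "derivatives_in F F" and f: "f \<in> F"
  shows "smooth_fun f"
proof -
  from F obtain deriv where deriv:
    "\<And>g. g \<in> F \<Longrightarrow> deriv g \<in> F \<and> (\<forall>x. (g has_real_derivative deriv g x) (at x))"
    unfolding derivatives_in_def by metis
  define D where "D k = (deriv ^^ k) f" for k
  have D_in: "D k \<in> F" for k
    by (induction k) (auto simp: D_def f deriv)
  have "(D k has_vector_derivative D (Suc k) t) (at t)" for k t
    using deriv[OF D_in[of k]] by (simp add: D_def has_real_derivative_iff_has_vector_derivative)
  moreover have "D 0 = f"
    by (simp add: D_def)
  ultimately show ?thesis
    unfolding smooth_fun_def by blast
qed

lemma smooth_fun_flat_comp:
  assumes q: "\<And>x. (q has_real_derivative q' x) (at x)"
    and q': "q' \<in> fun_algebra H"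
    and H: "derivatives_in (fun_algebra H) H"
  shows "smooth_fun (\<lambda>x. flat 0 (q x))"
proof -
  define Gs where "Gs = H \<union> range (\<lambda>m x. flat m (q x))"
  have H_sub: "fun_algebra H \<subseteq> fun_algebra Gs"
    by (rule fun_algebra_mono) (auto simp: Gs_def)
  have flat_q: "(\<lambda>x. flat m (q x)) \<in> fun_algebra Gs" for m
    by (rule fun_algebra.gen) (auto simp: Gs_def)
  have "derivatives_in (fun_algebra Gs) Gs"
    unfolding derivatives_in_def
  proof
    fix g assume "g \<in> Gs"
    then consider "g \<in> H" | m where "g = (\<lambda>x. flat m (q x))"
      by (auto simp: Gs_def)
    then show "\<exists>g'\<in>fun_algebra Gs. \<forall>x. (g has_real_derivative g' x) (at x)"
    proof cases
      case 1
      then show ?thesis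
        using H H_sub unfolding derivatives_in_def by blast
    next
      case 2
      let ?g' = "\<lambda>x. (flat (m + 2) (q x) + (- real m) * flat (m + 1) (q x)) * q' x"
      have "?g' \<in> fun_algebra Gs"
        using q' H_sub by (intro fun_algebra.mult fun_algebra.add fun_algebra.const flat_q) auto
      moreover have "(g has_real_derivative ?g' x) (at x)" for x
        unfolding 2 using DERIV_chain2[OF has_real_derivative_flat q] by simp
      ultimately show ?thesis
        by (intro bexI[of _ ?g']) auto
    qed
  qed
  then show ?thesis
    using smooth_fun_if_derivatives_in derivatives_in_fun_algebra flat_q[of 0] by blast
qed

lemma smooth_fun_scaleR:
  assumes "smooth_fun (f :: real \<Rightarrow> real)"
  shows "smooth_fun (\<lambda>t. f t *\<^sub>R v)"
proof -
  from assms obtain D where D: "D 0 = f" "\<And>k t. (D k has_vector_derivative D (Suc k) t) (at t)"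
    unfolding smooth_fun_def by blast
  have "((\<lambda>t. D k t *\<^sub>R v) has_vector_derivative D (Suc k) t *\<^sub>R v) (at t)" for k t
    using D(2)[of k t, folded has_real_derivative_iff_has_vector_derivative]
    by (auto intro!: derivative_eq_intros)
  then show ?thesis
    unfolding smooth_fun_def by (intro exI[of _ "\<lambda>k t. D k t *\<^sub>R v"]) (simp add: D(1))
qed

lemma smooth_fun_imp_continuous: "smooth_fun f \<Longrightarrow> continuous_on UNIV f"
  unfolding smooth_fun_def
  by (metis continuous_at_imp_continuous_on has_vector_derivative_continuous)

definition bump :: "real \<Rightarrow> real \<Rightarrow> real \<Rightarrow> real" where
  "bump m e t = flat 0 (e\<^sup>2 - (t - m)\<^sup>2)"

lemma smooth_fun_bump: "smooth_fun (bump m e)"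
proof -
  have id: "(\<lambda>x. x) \<in> fun_algebra {\<lambda>x. x}"
    by (rule fun_algebra.gen) simp
  have "smooth_fun (\<lambda>t. flat 0 (e\<^sup>2 - (t - m)\<^sup>2))"
  proof (rule smooth_fun_flat_comp)
    show "((\<lambda>t. e\<^sup>2 - (t - m)\<^sup>2) has_real_derivative 2 * m + (- 2) * x) (at x)" for x
      by (auto intro!: derivative_eq_intros simp: algebra_simps)
    show "(\<lambda>x. 2 * m + (- 2) * x) \<in> fun_algebra {\<lambda>x. x}"
      by (intro fun_algebra.add fun_algebra.mult fun_algebra.const id)
    show "derivatives_in (fun_algebra {\<lambda>x. x}) {\<lambda>x. x}"
      unfolding derivatives_in_def by (auto intro!: bexI[of _ "\<lambda>_. 1"] fun_algebra.const)
  qed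
  then show ?thesis
    by (simp add: bump_def[abs_def])
qed

lemma bump_nonneg: "bump m e t \<ge> 0"
  by (simp add: bump_def flat_nonneg)

lemma bump_pos_center: "e > 0 \<Longrightarrow> bump m e m > 0"
  by (simp add: bump_def flat_pos)

lemma bump_eq_0:
  assumes "0 \<le> e" "e \<le> \<bar>t - m\<bar>"
  shows "bump m e t = 0"
proof -
  have "e\<^sup>2 \<le> \<bar>t - m\<bar>\<^sup>2"
    using power_mono[OF assms(2,1)] .
  then show ?thesis
    unfolding bump_def by (intro flat_eq_0) simp
qed

definition periodic_bump :: "real \<Rightarrow> real \<Rightarrow> real \<Rightarrow> real \<Rightarrow> real" where
  "periodic_bump T m e t = flat 0 (cos (2 * pi / T * (t - m)) - cos (2 * pi / T * e))"

lemma smooth_fun_periodic_bump: "smooth_fun (periodic_bump T m e)"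
proof -
  define w where "w = 2 * pi / T"
  define H where "H = {\<lambda>t. sin (w * (t - m)), \<lambda>t. cos (w * (t - m))}"
  have sin: "(\<lambda>t. sin (w * (t - m))) \<in> fun_algebra H"
    and cos: "(\<lambda>t. cos (w * (t - m))) \<in> fun_algebra H"
    by (auto intro: fun_algebra.gen simp: H_def)
  have d_sin: "(\<lambda>x. w * cos (w * (x - m))) \<in> fun_algebra H"
    and d_cos: "(\<lambda>x. (- w) * sin (w * (x - m))) \<in> fun_algebra H"
    by (intro fun_algebra.mult fun_algebra.const sin cos)+
  have "smooth_fun (\<lambda>t. flat 0 (cos (w * (t - m)) - cos (w * e)))"
  proof (rule smooth_fun_flat_comp[OF _ d_cos])
    show "((\<lambda>t. cos (w * (t - m)) - cos (w * e)) has_real_derivative (- w) * sin (w * (x - m))) (at x)" for x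
      by (auto intro!: derivative_eq_intros)
    have "\<exists>g'\<in>fun_algebra H. \<forall>x. ((\<lambda>t. sin (w * (t - m))) has_real_derivative g' x) (at x)"
      by (rule bexI[OF _ d_sin]) (auto intro!: derivative_eq_intros)
    moreover have "\<exists>g'\<in>fun_algebra H. \<forall>x. ((\<lambda>t. cos (w * (t - m))) has_real_derivative g' x) (at x)"
      by (rule bexI[OF _ d_cos]) (auto intro!: derivative_eq_intros)
    ultimately show "derivatives_in (fun_algebra H) H"
      unfolding derivatives_in_def H_def by blast
  qed
  then show ?thesis
    by (simp add: periodic_bump_def[abs_def] w_def)
qed

lemma periodic_bump_nonneg: "periodic_bump T m e t \<ge> 0"
  by (simp add: periodic_bump_def flat_nonneg)

lemma periodic_bump_periodic:
  assumes "T \<noteq> 0"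
  shows "periodic_bump T m e (t + T) = periodic_bump T m e t"
proof -
  have "2 * pi / T * (t + T - m) = 2 * pi / T * (t - m) + 2 * pi"
    using assms by (simp add: field_simps)
  then show ?thesis
    by (simp add: periodic_bump_def)
qed

lemma scaled_angle_le_pi:
  assumes "T > 0" "x \<le> T / 2"
  shows "2 * pi / T * x \<le> pi"
proof -
  have "2 * pi / T * x = pi * (2 * x / T)"
    by simp
  also have "\<dots> \<le> pi * 1"
    using assms by (intro mult_left_mono) (auto simp: divide_le_eq)
  finally show ?thesis
    by simp
qed

lemma periodic_bump_pos_center:
  assumes "0 < e" "e < T / 2"
  shows "periodic_bump T m e m > 0"
proof -
  have "cos (2 * pi / T * e) < cos 0"
    using assms scaled_angle_le_pi[of T e] by (intro cos_monotone_0_pi) auto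
  then show ?thesis
    unfolding periodic_bump_def by (intro flat_pos) simp
qed

lemma periodic_bump_eq_0:
  assumes "T > 0" "e \<ge> 0" "e \<le> \<bar>t - m\<bar>" "\<bar>t - m\<bar> \<le> T / 2"
  shows "periodic_bump T m e t = 0"
proof -
  have "cos (2 * pi / T * (t - m)) = cos (2 * pi / T * \<bar>t - m\<bar>)"
    by (metis abs_real_def cos_minus mult_minus_right)
  also have "\<dots> \<le> cos (2 * pi / T * e)"
    using assms scaled_angle_le_pi[of T "\<bar>t - m\<bar>"]
    by (intro cos_monotone_0_pi_le mult_left_mono) auto
  finally show ?thesis
    unfolding periodic_bump_def by (intro flat_eq_0) simp
qed

lemma integral_subset_zero_outside:
  fixes f :: "'a::euclidean_space \<Rightarrow> 'b::banach"
  assumes "S \<subseteq> T" "\<And>x. x \<in> T \<Longrightarrow> x \<notin> S \<Longrightarrow> f x = 0"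
  shows "integral T f = integral S f"
proof -
  have "integral T f = integral T (\<lambda>x. if x \<in> S then f x else 0)"
    using assms(2) by (intro integral_cong) auto
  also have "\<dots> = integral S f"
    using assms(1) by (simp add: integral_restrict_Int Int_absorb2)
  finally show ?thesis .
qed

lemma integral_shift_zero_outside:
  fixes f :: "real \<Rightarrow> 'a::banach"
  assumes "\<And>x. x \<notin> {a..b} \<Longrightarrow> f x = 0" "\<And>x. x \<notin> {a..b} \<Longrightarrow> f (x - c) = 0"
  shows "integral {a..b} (\<lambda>x. f (x - c)) = integral {a..b} f"
proof -
  define K where "K = {min a (a - c)..max b (b - c)}"
  have zero_shifted: "f x = 0" if "x \<notin> {a - c..b - c}" for x
    using assms(2)[of "x + c"] that by auto
  have "integral {a..b} (\<lambda>x. f (x - c)) = integral {a - c..b - c} f"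
    using integral_shift_real_ivl[of a c b "\<lambda>x. f (x - c)"] by simp
  also have "\<dots> = integral K f"
    using zero_shifted by (intro integral_subset_zero_outside[symmetric]) (auto simp: K_def)
  also have "\<dots> = integral {a..b} f"
    using assms(1) by (intro integral_subset_zero_outside) (auto simp: K_def)
  finally show ?thesis .
qed

lemma integral_periodic_window:
  fixes f :: "real \<Rightarrow> 'a::banach"
  assumes T: "T > 0" and periodic: "\<And>x. f (x + T) = f x" and cont: "continuous_on UNIV f"
  shows "integral {a..a + T} f = integral {0..T} f"
proof -
  interpret periodic_fun_simple f T
    using periodic by unfold_locales
  have integrable: "f integrable_on {u..v}" for u v
    by (rule integrable_continuous_real) (rule continuous_on_subset[OF cont], simp)
  have window_in_first_period: "integral {b..b + T} f = integral {0..T} f" if "0 \<le> b" "b \<le> T" for b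
  proof -
    have "integral {0..b} f = integral {T..b + T} f"
      using integral_shift_real_ivl[of T T "b + T" f] periodic by simp
    moreover have "integral {b..T} f + integral {T..b + T} f = integral {b..b + T} f"
      using that T integrable by (intro Henstock_Kurzweil_Integration.integral_combine) auto
    moreover have "integral {0..b} f + integral {b..T} f = integral {0..T} f"
      using that T integrable by (intro Henstock_Kurzweil_Integration.integral_combine) auto
    ultimately show ?thesis
      by (metis add.commute)
  qed
  define k where "k = \<lfloor>a / T\<rfloor>"
  define b where "b = a - of_int k * T"
  have "of_int k \<le> a / T" "a / T < of_int k + 1"
    unfolding k_def by linarith+
  then have b: "0 \<le> b" "b \<le> T"
    using T unfolding b_def by (auto simp: field_simps)
  have "integral {a..a + T} f = integral {b..b + T} (\<lambda>x. f (x + of_int k * T))"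
    using integral_shift_real_ivl[of a "of_int k * T" "a + T" f] by (simp add: b_def algebra_simps)
  also have "\<dots> = integral {0..T} f"
    using window_in_first_period[OF b] by (simp add: plus_of_int)
  finally show ?thesis .
qed

lemma integral_periodic_shift:
  fixes f :: "real \<Rightarrow> 'a::banach"
  assumes "T > 0" "\<And>x. f (x + T) = f x" "continuous_on UNIV f"
  shows "integral {0..T} (\<lambda>x. f (x + c)) = integral {0..T} f"
  using integral_shift_real_ivl[of c c "c + T" f] integral_periodic_window[OF assms, of c] by simp

lemma small_interval_within:
  fixes \<alpha> \<beta> t r \<delta> :: real
  assumes "\<alpha> < \<beta>" "t \<in> {\<alpha>..\<beta>}" "r > 0" "\<delta> > 0"
  obtains m e where "\<alpha> \<le> m - e" "m + e \<le> \<beta>" "0 < e" "e < \<delta>" "{m - e..m + e} \<subseteq> {t - r<..<t + r}"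
proof -
  define c where "c = max \<alpha> (t - min (r / 2) (\<delta> / 2))"
  define d where "d = min \<beta> (t + min (r / 2) (\<delta> / 2))"
  have "\<alpha> \<le> c" "c < d" "d \<le> \<beta>" "d - c < 2 * \<delta>" "t - r < c" "d < t + r"
    using assms unfolding c_def d_def by (auto simp: min_def max_def)
  then show ?thesis
    by (intro that[of "(c + d) / 2" "(d - c) / 2"]) (auto simp: field_simps)
qed

lemma fundamental_lemma_calculus_of_variations:
  fixes F :: "real \<Rightarrow> 'a::real_inner" and \<psi> :: "real \<Rightarrow> real \<Rightarrow> real \<Rightarrow> real"
  assumes F: "continuous_on {\<alpha>..\<beta>} F" and "\<alpha> < \<beta>" and "\<delta> > 0"
    and \<psi>_cont: "\<And>m e. continuous_on UNIV (\<psi> m e)"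
    and \<psi>_nonneg: "\<And>m e u. 0 \<le> \<psi> m e u"
    and \<psi>_pos: "\<And>m e. 0 < e \<Longrightarrow> e < \<delta> \<Longrightarrow> 0 < \<psi> m e m"
    and orthogonal: "\<And>m e v. \<alpha> \<le> m - e \<Longrightarrow> m + e \<le> \<beta> \<Longrightarrow> 0 < e \<Longrightarrow> e < \<delta> \<Longrightarrow>
      integral {m - e..m + e} (\<lambda>u. (F u \<bullet> v) * \<psi> m e u) = 0"
    and t: "t \<in> {\<alpha>..\<beta>}"
  shows "F t = 0"
proof (rule ccontr)
  assume "F t \<noteq> 0"
  define g where "g u = F u \<bullet> F t" for u
  have g_cont: "continuous_on {\<alpha>..\<beta>} g"
    unfolding g_def by (intro continuous_intros F)
  have "g t > 0"
    using \<open>F t \<noteq> 0\<close> by (simp add: g_def)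
  then obtain r where "r > 0" and r: "\<And>u. u \<in> {\<alpha>..\<beta>} \<Longrightarrow> dist u t < r \<Longrightarrow> dist (g u) (g t) < g t"
    using g_cont t unfolding continuous_on_iff by metis
  obtain m e where me: "\<alpha> \<le> m - e" "m + e \<le> \<beta>" "0 < e" "e < \<delta>"
    and near: "{m - e..m + e} \<subseteq> {t - r<..<t + r}"
    using small_interval_within[OF \<open>\<alpha> < \<beta>\<close> t \<open>r > 0\<close> \<open>\<delta> > 0\<close>] by blast
  have g_pos: "g u > 0" if "u \<in> {m - e..m + e}" for u
  proof -
    have "dist (g u) (g t) < g t"
      using r[of u] that me near by (force simp: dist_real_def)
    then show ?thesis
      by (auto simp: dist_real_def)
  qed
  define k where "k u = g u * \<psi> m e u" for u
  have k_cont: "continuous_on {m - e..m + e} k"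
    unfolding k_def using me
    by (intro continuous_intros continuous_on_subset[OF g_cont] continuous_on_subset[OF \<psi>_cont]) auto
  have "(k has_integral 0) {m - e..m + e}"
    using integrable_continuous_real[OF k_cont] orthogonal[OF me, of "F t"]
    unfolding k_def g_def by (metis has_integral_integral)
  moreover have "0 \<le> k u" if "u \<in> box (m - e) (m + e)" for u
    using that \<psi>_nonneg g_pos[of u] unfolding k_def by (auto intro!: mult_nonneg_nonneg)
  ultimately have "k m = 0"
    using has_integral_0_cbox_imp_0[of "m - e" "m + e" k m] k_cont me by auto
  moreover have "k m > 0"
    unfolding k_def using g_pos[of m] \<psi>_pos[OF me(3,4)] me by auto
  ultimately show False
    by simp
qed

lemma continuous_on_clamp:
  fixes y :: "real \<Rightarrow> 'a::topological_space"
  assumes "a \<le> b" "continuous_on {a..b} y"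
  shows "continuous_on UNIV (\<lambda>u. y (max a (min b u)))"
  using assms by (intro continuous_on_compose2[OF assms(2)] continuous_intros) auto

lemma continuous_on_compose_UNIV:
  "continuous_on UNIV g \<Longrightarrow> continuous_on S f \<Longrightarrow> continuous_on S (\<lambda>x. g (f x))"
  by (rule continuous_on_compose2) auto

lemma symmetric_matrix_inner_commute:
  fixes M :: "real^'n^'n"
  assumes "transpose M = M"
  shows "(M *v x) \<bullet> z = (M *v z) \<bullet> x"
  by (metis assms dot_lmul_matrix inner_commute transpose_matrix_vector)

lemma matrix_inner_diff_by_parts:
  fixes M :: "real^'n^'n"
  shows "(M *v (c - b)) \<bullet> (p - q) =
    (M *v (c - b)) \<bullet> p - (M *v (b - a)) \<bullet> q - (M *v (a - 2 *\<^sub>R b + c)) \<bullet> q"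
proof -
  have "a - 2 *\<^sub>R b + c = (c - b) - (b - a)"
    by (simp add: scaleR_2 algebra_simps)
  then have "M *v (a - 2 *\<^sub>R b + c) = M *v (c - b) - M *v (b - a)"
    by (simp only: matrix_vector_mult_diff_distrib)
  then show ?thesis
    by (simp add: inner_diff_left inner_diff_right)
qed

lemma has_real_derivative_quadratic_form:
  fixes M :: "real^'n^'n"
  assumes "transpose M = M"
  shows "((\<lambda>e. (M *v (u + e *\<^sub>R w)) \<bullet> (u + e *\<^sub>R w))
    has_real_derivative 2 * ((M *v (u + e *\<^sub>R w)) \<bullet> w)) (at e)"
proof -
  have "(M *v w) \<bullet> u = (M *v u) \<bullet> w"
    using symmetric_matrix_inner_commute[OF assms] .
  then have expand: "(M *v (u + e *\<^sub>R w)) \<bullet> (u + e *\<^sub>R w) =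
      (M *v u) \<bullet> u + 2 * e * ((M *v u) \<bullet> w) + e\<^sup>2 * ((M *v w) \<bullet> w)" for e
    by (simp add: matrix_vector_right_distrib matrix_vector_mult_scaleR inner_add_left
        inner_add_right power2_eq_square algebra_simps)
  show ?thesis
    unfolding expand
    by (auto intro!: derivative_eq_intros
        simp: matrix_vector_right_distrib matrix_vector_mult_scaleR inner_add_left algebra_simps)
qed

lemma has_real_derivative_along_line:
  assumes "\<forall>x. (U has_derivative (\<lambda>v. G x \<bullet> v)) (at x)"
  shows "((\<lambda>e. U (p + e *\<^sub>R q)) has_real_derivative G (p + e *\<^sub>R q) \<bullet> q) (at e)"
proof -
  have "(U \<circ> (\<lambda>e. p + e *\<^sub>R q) has_derivative (\<lambda>v. G (p + e *\<^sub>R q) \<bullet> v) \<circ> (\<lambda>x. x *\<^sub>R q)) (at e)"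
    using assms by (intro diff_chain_at) (auto intro!: derivative_eq_intros)
  moreover have "(\<lambda>v. G (p + e *\<^sub>R q) \<bullet> v) \<circ> (\<lambda>x. x *\<^sub>R q) = (*) (G (p + e *\<^sub>R q) \<bullet> q)"
    by (auto simp: fun_eq_iff)
  ultimately show ?thesis
    unfolding has_field_derivative_def by (simp add: o_def)
qed

locale discrete_lagrangian =
  fixes s :: nat and A :: "nat \<Rightarrow> real^'n^'n" and h :: real
    and U :: "real^'n \<Rightarrow> real" and G :: "real^'n \<Rightarrow> real^'n"
  assumes A_symmetric: "\<forall>j\<in>{1..s div 2}. transpose (A j) = A j"
    and h_pos: "h > 0"
    and U_gradient: "\<forall>x. (U has_derivative (\<lambda>v. G x \<bullet> v)) (at x)"
    and G_continuous: "continuous_on UNIV G"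
begin

abbreviation horizon :: real where
  "horizon \<equiv> real (s div 2) * h"

definition first_variation :: "(real \<Rightarrow> real^'n) \<Rightarrow> (real \<Rightarrow> real^'n) \<Rightarrow> real \<Rightarrow> real" where
  "first_variation y dy t =
     1 / h\<^sup>2 * (\<Sum>j = 1..s div 2.
        (A j *v (y (t + real j * h) - y t)) \<bullet> (dy (t + real j * h) - dy t))
     + G (y t) \<bullet> dy t"

text \<open>The discrete counterpart of the boundary term of an integration by parts: it enters the
  first variation only through the difference of its values at \<open>t\<close> and \<open>t - j h\<close>.\<close>

definition boundary_term :: "(real \<Rightarrow> real^'n) \<Rightarrow> (real \<Rightarrow> real^'n) \<Rightarrow> nat \<Rightarrow> real \<Rightarrow> real" where
  "boundary_term y dy j t = (A j *v (y (t + real j * h) - y t)) \<bullet> dy (t + real j * h)"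

definition residual :: "(real \<Rightarrow> real^'n) \<Rightarrow> real \<Rightarrow> real^'n" where
  "residual y t = G (y t) - (1 / h\<^sup>2) *\<^sub>R
     (\<Sum>j = 1..s div 2. A j *v (y (t - real j * h) - 2 *\<^sub>R y t + y (t + real j * h)))"

lemma residual_eq_0_iff:
  "residual y t = 0 \<longleftrightarrow>
    (\<Sum>j = 1..s div 2. A j *v (y (t - real j * h) - 2 *\<^sub>R y t + y (t + real j * h))) = h\<^sup>2 *\<^sub>R G (y t)"
  unfolding residual_def using h_pos by (auto simp: field_simps)

lemma has_real_derivative_LDelta:
  "((\<lambda>e. LDelta s A h U (\<lambda>t. y t + e *\<^sub>R dy t) t)
    has_real_derivative first_variation (\<lambda>t. y t + e *\<^sub>R dy t) dy t) (at e)"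
proof -
  define \<Delta>y where "\<Delta>y j = y (t + real j * h) - y t" for j
  define \<Delta>dy where "\<Delta>dy j = dy (t + real j * h) - dy t" for j
  have increment: "y (t + real j * h) + e *\<^sub>R dy (t + real j * h) - (y t + e *\<^sub>R dy t) = \<Delta>y j + e *\<^sub>R \<Delta>dy j"
    for e j by (simp add: \<Delta>y_def \<Delta>dy_def algebra_simps)
  have "((\<lambda>e. \<Sum>j = 1..s div 2. (A j *v (\<Delta>y j + e *\<^sub>R \<Delta>dy j)) \<bullet> (\<Delta>y j + e *\<^sub>R \<Delta>dy j))
    has_real_derivative (\<Sum>j = 1..s div 2. 2 * ((A j *v (\<Delta>y j + e *\<^sub>R \<Delta>dy j)) \<bullet> \<Delta>dy j))) (at e)"
    using A_symmetric by (intro DERIV_sum has_real_derivative_quadratic_form) auto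
  then have "((\<lambda>e. 1 / (2 * h\<^sup>2) * (\<Sum>j = 1..s div 2. (A j *v (\<Delta>y j + e *\<^sub>R \<Delta>dy j)) \<bullet> (\<Delta>y j + e *\<^sub>R \<Delta>dy j))
      + U (y t + e *\<^sub>R dy t))
    has_real_derivative 1 / (2 * h\<^sup>2) * (\<Sum>j = 1..s div 2. 2 * ((A j *v (\<Delta>y j + e *\<^sub>R \<Delta>dy j)) \<bullet> \<Delta>dy j))
      + G (y t + e *\<^sub>R dy t) \<bullet> dy t) (at e)"
    by (intro DERIV_add DERIV_cmult has_real_derivative_along_line U_gradient)
  then show ?thesis
    unfolding LDelta_def first_variation_def increment
    by (simp add: \<Delta>dy_def sum_distrib_left[symmetric])
qed

lemma continuous_on_LDelta:
  assumes "continuous_on UNIV y"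
  shows "continuous_on S (LDelta s A h U y)"
proof -
  have "continuous_on UNIV U"
    using U_gradient by (meson continuous_at_imp_continuous_on has_derivative_continuous)
  then show ?thesis
    unfolding LDelta_def[abs_def]
    by (intro continuous_intros continuous_on_compose_UNIV[OF assms]
        continuous_on_compose_UNIV[OF \<open>continuous_on UNIV U\<close>]
        bounded_linear.continuous_on[OF matrix_vector_mul_bounded_linear])
qed

lemma continuous_on_first_variation_perturbed:
  assumes "continuous_on UNIV y" "continuous_on UNIV dy"
  shows "continuous_on S (\<lambda>(e, t). first_variation (\<lambda>t. y t + e *\<^sub>R dy t) dy t)"
  unfolding first_variation_def split_beta
  by (intro continuous_intros continuous_on_compose_UNIV[OF assms(1)]
      continuous_on_compose_UNIV[OF assms(2)] continuous_on_compose_UNIV[OF G_continuous]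
      bounded_linear.continuous_on[OF matrix_vector_mul_bounded_linear])

lemma has_real_derivative_integral_LDelta:
  assumes "continuous_on UNIV y" "continuous_on UNIV dy"
  shows "((\<lambda>e. integral {c..d} (LDelta s A h U (\<lambda>t. y t + e *\<^sub>R dy t)))
    has_real_derivative integral {c..d} (first_variation y dy)) (at 0)"
proof -
  have "((\<lambda>e. integral (cbox c d) (LDelta s A h U (\<lambda>t. y t + e *\<^sub>R dy t)))
    has_real_derivative integral (cbox c d) (first_variation (\<lambda>t. y t + 0 *\<^sub>R dy t) dy)) (at 0 within UNIV)"
  proof (rule leibniz_rule_field_derivative)
    show "LDelta s A h U (\<lambda>t. y t + e *\<^sub>R dy t) integrable_on cbox c d" for e
      using assms by (intro integrable_continuous continuous_on_subset[OF continuous_on_LDelta])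
        (auto intro!: continuous_intros)
  qed (use has_real_derivative_LDelta continuous_on_first_variation_perturbed[OF assms] in auto)
  then show ?thesis
    by simp
qed

lemma stationary_imp_integral_first_variation_eq_0:
  assumes "continuous_on UNIV y" "continuous_on UNIV dy"
    and "((\<lambda>e. (integral {c..d} (LDelta s A h U (\<lambda>t. y t + e *\<^sub>R dy t))
                - integral {c..d} (LDelta s A h U y)) / e) \<longlongrightarrow> 0) (at 0)"
  shows "integral {c..d} (first_variation y dy) = 0"
proof -
  have "((\<lambda>e. (integral {c..d} (LDelta s A h U (\<lambda>t. y t + e *\<^sub>R dy t))
                - integral {c..d} (LDelta s A h U (\<lambda>t. y t + 0 *\<^sub>R dy t))) / (e - 0))
      \<longlongrightarrow> integral {c..d} (first_variation y dy)) (at 0)"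
    using has_real_derivative_integral_LDelta[OF assms(1,2)] unfolding has_field_derivative_iff .
  then show ?thesis
    using tendsto_unique[OF _ _ assms(3)] by simp
qed

lemma first_variation_summation_by_parts:
  "first_variation y dy t = residual y t \<bullet> dy t
     + 1 / h\<^sup>2 * (\<Sum>j = 1..s div 2. boundary_term y dy j t - boundary_term y dy j (t - real j * h))"
proof -
  have by_parts: "(A j *v (y (t + real j * h) - y t)) \<bullet> (dy (t + real j * h) - dy t) =
      boundary_term y dy j t - boundary_term y dy j (t - real j * h)
      - (A j *v (y (t - real j * h) - 2 *\<^sub>R y t + y (t + real j * h))) \<bullet> dy t" for j
    unfolding boundary_term_def by (simp add: matrix_inner_diff_by_parts)
  let ?E = "\<lambda>j. A j *v (y (t - real j * h) - 2 *\<^sub>R y t + y (t + real j * h))"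
  let ?B = "\<lambda>j. boundary_term y dy j t - boundary_term y dy j (t - real j * h)"
  have "first_variation y dy t = 1 / h\<^sup>2 * (\<Sum>j = 1..s div 2. ?B j - ?E j \<bullet> dy t) + G (y t) \<bullet> dy t"
    unfolding first_variation_def by_parts ..
  also have "\<dots> = (G (y t) - (1 / h\<^sup>2) *\<^sub>R (\<Sum>j = 1..s div 2. ?E j)) \<bullet> dy t
      + 1 / h\<^sup>2 * (\<Sum>j = 1..s div 2. ?B j)"
    by (simp add: sum_subtractf inner_diff_left inner_sum_left right_diff_distrib)
  finally show ?thesis
    unfolding residual_def .
qed

lemma continuous_on_boundary_term:
  assumes "continuous_on UNIV y" "continuous_on UNIV dy"
  shows "continuous_on S (boundary_term y dy j)"
  unfolding boundary_term_def[abs_def]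
  by (intro continuous_intros continuous_on_compose_UNIV[OF assms(1)]
      continuous_on_compose_UNIV[OF assms(2)]
      bounded_linear.continuous_on[OF matrix_vector_mul_bounded_linear])

lemma continuous_on_residual:
  assumes "continuous_on UNIV y"
  shows "continuous_on S (residual y)"
  unfolding residual_def[abs_def]
  by (intro continuous_intros continuous_on_compose_UNIV[OF assms]
      continuous_on_compose_UNIV[OF G_continuous]
      bounded_linear.continuous_on[OF matrix_vector_mul_bounded_linear])

lemma integral_first_variation_eq_residual:
  assumes y: "continuous_on UNIV y" and dy: "continuous_on UNIV dy"
    and boundary: "\<And>j. j \<in> {1..s div 2} \<Longrightarrow>
      integral {c..d} (\<lambda>t. boundary_term y dy j (t - real j * h)) = integral {c..d} (boundary_term y dy j)"
  shows "integral {c..d} (first_variation y dy) = integral {c..d} (\<lambda>t. residual y t \<bullet> dy t)"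
proof -
  let ?B = "\<lambda>j t. boundary_term y dy j t"
  let ?B' = "\<lambda>j t. boundary_term y dy j (t - real j * h)"
  have B: "?B j integrable_on {c..d}" and B': "?B' j integrable_on {c..d}" for j
    by (auto intro!: integrable_continuous_interval continuous_intros
        continuous_on_boundary_term[OF y dy] continuous_on_compose2[OF continuous_on_boundary_term[OF y dy]])
  have R: "(\<lambda>t. residual y t \<bullet> dy t) integrable_on {c..d}"
    using y dy by (auto intro!: integrable_continuous_interval continuous_intros continuous_on_residual
        continuous_on_subset[OF dy])
  have "integral {c..d} (first_variation y dy) =
      integral {c..d} (\<lambda>t. residual y t \<bullet> dy t + 1 / h\<^sup>2 * (\<Sum>j = 1..s div 2. ?B j t - ?B' j t))"
    by (intro integral_cong first_variation_summation_by_parts)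
  also have "\<dots> = integral {c..d} (\<lambda>t. residual y t \<bullet> dy t)
      + 1 / h\<^sup>2 * (\<Sum>j = 1..s div 2. integral {c..d} (?B j) - integral {c..d} (?B' j))"
  proof -
    have S: "(\<lambda>t. \<Sum>j = 1..s div 2. ?B j t - ?B' j t) integrable_on {c..d}"
      by (intro integrable_sum integrable_diff B B' finite_atLeastAtMost)
    have "integral {c..d} (\<lambda>t. \<Sum>j = 1..s div 2. ?B j t - ?B' j t)
        = (\<Sum>j = 1..s div 2. integral {c..d} (?B j) - integral {c..d} (?B' j))"
      by (simp add: integral_sum integrable_diff B B' integral_diff)
    then show ?thesis
      unfolding Henstock_Kurzweil_Integration.integral_add[OF R integrable_on_mult_right[OF S]]
        integral_mult_right by simp
  qed
  also have "\<dots> = integral {c..d} (\<lambda>t. residual y t \<bullet> dy t)"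
    using boundary by simp
  finally show ?thesis .
qed

lemma shift_le_horizon: "j \<le> s div 2 \<Longrightarrow> 0 \<le> real j * h \<and> real j * h \<le> horizon"
  using h_pos by (auto intro: mult_right_mono)

lemma LDelta_cong:
  assumes "\<And>u. u \<in> {t..t + horizon} \<Longrightarrow> y u = z u"
  shows "LDelta s A h U y t = LDelta s A h U z t"
proof -
  have "y (t + real j * h) = z (t + real j * h)" if "j \<le> s div 2" for j
    using assms shift_le_horizon[OF that] by auto
  from this[of 0] this show ?thesis
    unfolding LDelta_def by (intro arg_cong2[where f = "(+)"] sum.cong) auto
qed

lemma residual_cong:
  assumes "\<And>u. u \<in> {t - horizon..t + horizon} \<Longrightarrow> y u = z u"
  shows "residual y t = residual z t"
proof -
  have "y (t + real j * h) = z (t + real j * h)" "y (t - real j * h) = z (t - real j * h)"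
    if "j \<le> s div 2" for j
    using assms shift_le_horizon[OF that] by auto
  from this(1)[of 0] this show ?thesis
    unfolding residual_def by (intro arg_cong2[where f = "(-)"] sum.cong) auto
qed

lemma residual_periodic:
  assumes "\<And>t. y (t + T) = y t"
  shows "residual y (t + T) = residual y t"
proof -
  have "y (t + T + c) = y (t + c)" "y (t + T - c) = y (t - c)" for c
    using assms[of "t + c"] assms[of "t - c"] by (simp_all add: algebra_simps)
  then show ?thesis
    by (simp add: residual_def assms)
qed

lemma LDelta_perturbation_eq_outside:
  assumes "\<And>u. u \<notin> {p..q} \<Longrightarrow> dy u = 0" "t \<notin> {p - horizon..q}"
  shows "LDelta s A h U (\<lambda>t. y t + e *\<^sub>R dy t) t = LDelta s A h U y t"
  using assms(1) by (intro LDelta_cong) (use assms(2) in auto)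

lemma integral_LDelta_perturbation_localize:
  assumes support: "\<And>u. u \<notin> {p..q} \<Longrightarrow> dy u = 0" and "{p - horizon..q} \<subseteq> W"
  shows "integral W (\<lambda>t. LDelta s A h U (\<lambda>t. y t + e *\<^sub>R dy t) t - LDelta s A h U y t)
    = integral {p - horizon..q} (\<lambda>t. LDelta s A h U (\<lambda>t. y t + e *\<^sub>R dy t) t - LDelta s A h U y t)"
proof (rule integral_subset_zero_outside[OF assms(2)])
  show "LDelta s A h U (\<lambda>t. y t + e *\<^sub>R dy t) t - LDelta s A h U y t = 0"
    if "t \<notin> {p - horizon..q}" for t
    using LDelta_perturbation_eq_outside[OF support that] by simp
qed

lemma compact_support_stationary_imp_residual_orthogonal:
  assumes y: "continuous_on UNIV y" and dy: "continuous_on UNIV dy"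
    and support: "\<And>t. t \<notin> {p..q} \<Longrightarrow> dy t = 0"
    and stationary: "((\<lambda>e. integral {p - horizon..q}
        (\<lambda>t. LDelta s A h U (\<lambda>t. y t + e *\<^sub>R dy t) t - LDelta s A h U y t) / e) \<longlongrightarrow> 0) (at 0)"
  shows "integral {p..q} (\<lambda>t. residual y t \<bullet> dy t) = 0"
proof -
  have "integral {p - horizon..q} (\<lambda>t. LDelta s A h U (\<lambda>t. y t + e *\<^sub>R dy t) t - LDelta s A h U y t)
      = integral {p - horizon..q} (LDelta s A h U (\<lambda>t. y t + e *\<^sub>R dy t))
        - integral {p - horizon..q} (LDelta s A h U y)" for e
    using y dy by (intro integral_diff integrable_continuous_interval continuous_on_LDelta)
      (auto intro!: continuous_intros)
  then have "integral {p - horizon..q} (first_variation y dy) = 0"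
    using stationary by (intro stationary_imp_integral_first_variation_eq_0[OF y dy]) simp
  moreover have "integral {p - horizon..q} (\<lambda>t. boundary_term y dy j (t - real j * h))
      = integral {p - horizon..q} (boundary_term y dy j)" if "j \<in> {1..s div 2}" for j
    using shift_le_horizon[of j] that
    by (intro integral_shift_zero_outside) (auto simp: boundary_term_def support)
  ultimately have "integral {p - horizon..q} (\<lambda>t. residual y t \<bullet> dy t) = 0"
    using integral_first_variation_eq_residual[OF y dy] by simp
  moreover have "integral {p - horizon..q} (\<lambda>t. residual y t \<bullet> dy t)
      = integral {p..q} (\<lambda>t. residual y t \<bullet> dy t)"
    using h_pos by (intro integral_subset_zero_outside) (auto simp: support)
  ultimately show ?thesis
    by simp
qed

lemma periodic_stationary_imp_residual_orthogonal:
  assumes T: "T > 0"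
    and y: "continuous_on UNIV y" "\<And>t. y (t + T) = y t"
    and dy: "continuous_on UNIV dy" "\<And>t. dy (t + T) = dy t"
    and stationary: "((\<lambda>e. (integral {0..T} (LDelta s A h U (\<lambda>t. y t + e *\<^sub>R dy t))
        - integral {0..T} (LDelta s A h U y)) / e) \<longlongrightarrow> 0) (at 0)"
  shows "integral {0..T} (\<lambda>t. residual y t \<bullet> dy t) = 0"
proof -
  have "integral {0..T} (first_variation y dy) = 0"
    by (rule stationary_imp_integral_first_variation_eq_0[OF y(1) dy(1) stationary])
  moreover have "integral {0..T} (\<lambda>t. boundary_term y dy j (t + - (real j * h)))
      = integral {0..T} (boundary_term y dy j)" for j
  proof (rule integral_periodic_shift[OF T])
    fix t
    have "t + T + real j * h = (t + real j * h) + T"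
      by simp
    then show "boundary_term y dy j (t + T) = boundary_term y dy j t"
      unfolding boundary_term_def by (simp only: y(2) dy(2))
  qed (rule continuous_on_boundary_term[OF y(1) dy(1)])
  ultimately show ?thesis
    using integral_first_variation_eq_residual[OF y(1) dy(1)] by simp
qed

lemma functional_equation_circle:
  assumes T: "T > 0" and y: "continuous_on UNIV y" "\<And>t. y (t + T) = y t"
    and stationary: "\<And>dy. smooth_fun dy \<Longrightarrow> (\<forall>t. dy (t + T) = dy t) \<Longrightarrow>
      ((\<lambda>e. (S_circle s A h U T (\<lambda>t. y t + e *\<^sub>R dy t) - S_circle s A h U T y) / e) \<longlongrightarrow> 0) (at 0)"
  shows "(\<Sum>j = 1..s div 2. A j *v (y (t - real j * h) - 2 *\<^sub>R y t + y (t + real j * h)))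
    = h\<^sup>2 *\<^sub>R G (y t)"
proof -
  have "residual y t = 0"
  proof (rule fundamental_lemma_calculus_of_variations
      [where \<alpha> = "t - 1" and \<beta> = "t + 1" and \<delta> = "T / 2" and \<psi> = "periodic_bump T"])
    fix m e :: real and v :: "real^'n"
    assume e: "0 < e" "e < T / 2"
    define dy where "dy t = periodic_bump T m e t *\<^sub>R v" for t
    have dy_smooth: "smooth_fun dy"
      unfolding dy_def by (intro smooth_fun_scaleR smooth_fun_periodic_bump)
    have dy_periodic: "dy (t + T) = dy t" for t
      using T by (simp add: dy_def periodic_bump_periodic)
    have residual_dy: "residual y u \<bullet> dy u = (residual y u \<bullet> v) * periodic_bump T m e u" for u
      by (simp add: dy_def)
    have cont: "continuous_on UNIV (\<lambda>u. residual y u \<bullet> dy u)"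
      using smooth_fun_imp_continuous[OF dy_smooth]
      by (intro continuous_intros continuous_on_residual[OF y(1)])
    have "integral {0..T} (\<lambda>u. residual y u \<bullet> dy u) = 0"
      using stationary[OF dy_smooth] dy_periodic unfolding S_circle_def
      by (intro periodic_stationary_imp_residual_orthogonal[OF T y(1,2) smooth_fun_imp_continuous[OF dy_smooth]])
        auto
    moreover have "integral {m - T / 2..m - T / 2 + T} (\<lambda>u. residual y u \<bullet> dy u)
        = integral {0..T} (\<lambda>u. residual y u \<bullet> dy u)"
      using T dy_periodic cont by (intro integral_periodic_window) (auto simp: residual_periodic y(2))
    moreover have "integral {m - T / 2..m - T / 2 + T} (\<lambda>u. residual y u \<bullet> dy u)
        = integral {m - e..m + e} (\<lambda>u. residual y u \<bullet> dy u)"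
      using T e by (intro integral_subset_zero_outside) (auto simp: dy_def periodic_bump_eq_0)
    ultimately show "integral {m - e..m + e} (\<lambda>u. (residual y u \<bullet> v) * periodic_bump T m e u) = 0"
      by (simp add: residual_dy)
  qed (use T in \<open>auto intro: continuous_on_residual[OF y(1)] smooth_fun_imp_continuous[OF smooth_fun_periodic_bump]
      periodic_bump_nonneg periodic_bump_pos_center\<close>)
  then show ?thesis
    by (simp add: residual_eq_0_iff)
qed

lemma bump_variation_stationary_imp_orthogonal:
  assumes y: "continuous_on UNIV y" and "0 < e"
    and stationary: "((\<lambda>\<epsilon>. integral {m - e - horizon..m + e}
        (\<lambda>t. LDelta s A h U (\<lambda>t. y t + \<epsilon> *\<^sub>R (bump m e t *\<^sub>R v)) t - LDelta s A h U y t) / \<epsilon>)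
        \<longlongrightarrow> 0) (at 0)"
  shows "integral {m - e..m + e} (\<lambda>u. (residual y u \<bullet> v) * bump m e u) = 0"
proof -
  have "integral {m - e..m + e} (\<lambda>u. residual y u \<bullet> (bump m e u *\<^sub>R v)) = 0"
    using assms smooth_fun_imp_continuous[OF smooth_fun_scaleR[OF smooth_fun_bump]]
    by (intro compact_support_stationary_imp_residual_orthogonal) (auto simp: bump_eq_0)
  then show ?thesis
    by (simp add: mult.commute)
qed

lemma functional_equation_line:
  assumes y: "continuous_on UNIV y"
    and stationary: "\<And>dy. smooth_fun dy \<Longrightarrow> bounded {t. dy t \<noteq> 0} \<Longrightarrow>
      ((\<lambda>e. S_line_diff s A h U y (\<lambda>t. y t + e *\<^sub>R dy t) / e) \<longlongrightarrow> 0) (at 0)"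
  shows "(\<Sum>j = 1..s div 2. A j *v (y (t - real j * h) - 2 *\<^sub>R y t + y (t + real j * h)))
    = h\<^sup>2 *\<^sub>R G (y t)"
proof -
  have "residual y t = 0"
  proof (rule fundamental_lemma_calculus_of_variations
      [where \<alpha> = "t - 1" and \<beta> = "t + 1" and \<delta> = 1 and \<psi> = bump])
    fix m e :: real and v :: "real^'n"
    assume "0 < e"
    define dy where "dy t = bump m e t *\<^sub>R v" for t
    have support: "dy u = 0" if "u \<notin> {m - e..m + e}" for u
      using that \<open>0 < e\<close> by (auto simp: dy_def bump_eq_0)
    have "bounded {t. dy t \<noteq> 0}"
      by (rule bounded_subset[OF bounded_closed_interval[of "m - e" "m + e"]]) (use support in blast)
    then have "((\<lambda>\<epsilon>. S_line_diff s A h U y (\<lambda>t. y t + \<epsilon> *\<^sub>R dy t) / \<epsilon>) \<longlongrightarrow> 0) (at 0)"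
      unfolding dy_def by (intro stationary smooth_fun_scaleR smooth_fun_bump)
    moreover have "S_line_diff s A h U y (\<lambda>t. y t + \<epsilon> *\<^sub>R dy t) = integral {m - e - horizon..m + e}
        (\<lambda>t. LDelta s A h U (\<lambda>t. y t + \<epsilon> *\<^sub>R dy t) t - LDelta s A h U y t)" for \<epsilon>
      unfolding S_line_diff_def by (intro integral_LDelta_perturbation_localize support) auto
    ultimately show "integral {m - e..m + e} (\<lambda>u. (residual y u \<bullet> v) * bump m e u) = 0"
      using \<open>0 < e\<close> unfolding dy_def by (intro bump_variation_stationary_imp_orthogonal[OF y]) auto
  qed (auto intro: continuous_on_residual[OF y] smooth_fun_imp_continuous[OF smooth_fun_bump]
      bump_nonneg bump_pos_center)
  then show ?thesis
    by (simp add: residual_eq_0_iff)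
qed

lemma S_interval_perturbation_localize:
  assumes z_eq: "\<And>u. u \<in> {a..b} \<Longrightarrow> z u = y u"
    and z: "continuous_on UNIV z" and dy: "continuous_on UNIV dy"
    and support: "\<And>u. u \<notin> {p..q} \<Longrightarrow> dy u = 0" and "a + horizon \<le> p" "q \<le> b - horizon"
  shows "S_interval s A h U a b (\<lambda>t. y t + e *\<^sub>R dy t) - S_interval s A h U a b y
    = integral {p - horizon..q} (\<lambda>t. LDelta s A h U (\<lambda>t. z t + e *\<^sub>R dy t) t - LDelta s A h U z t)"
proof -
  have same: "LDelta s A h U (\<lambda>u. y u + e *\<^sub>R dy u) t = LDelta s A h U (\<lambda>u. z u + e *\<^sub>R dy u) t"
    "LDelta s A h U y t = LDelta s A h U z t" if "t \<in> {a..b - horizon}" for t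
    using that by (auto intro!: LDelta_cong simp: z_eq)
  have "S_interval s A h U a b (\<lambda>t. y t + e *\<^sub>R dy t) - S_interval s A h U a b y
      = integral {a..b - horizon} (LDelta s A h U (\<lambda>t. z t + e *\<^sub>R dy t))
        - integral {a..b - horizon} (LDelta s A h U z)"
    unfolding S_interval_def by (intro arg_cong2[where f = "(-)"] integral_cong) (use same in auto)
  also have "\<dots> = integral {a..b - horizon}
      (\<lambda>t. LDelta s A h U (\<lambda>t. z t + e *\<^sub>R dy t) t - LDelta s A h U z t)"
    using z dy
    by (intro integral_diff[symmetric] integrable_continuous_interval continuous_on_LDelta)
      (auto intro!: continuous_intros)
  also have "\<dots> = integral {p - horizon..q}
      (\<lambda>t. LDelta s A h U (\<lambda>t. z t + e *\<^sub>R dy t) t - LDelta s A h U z t)"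
    using assms(5,6) by (intro integral_LDelta_perturbation_localize support) auto
  finally show ?thesis .
qed

lemma functional_equation_interval:
  assumes ab: "a + horizon < b - horizon" and y: "continuous_on {a..b} y"
    and stationary: "\<And>dy. smooth_fun dy \<Longrightarrow> {t. dy t \<noteq> 0} \<subseteq> {a + horizon..b - horizon} \<Longrightarrow>
      ((\<lambda>e. (S_interval s A h U a b (\<lambda>t. y t + e *\<^sub>R dy t) - S_interval s A h U a b y) / e)
        \<longlongrightarrow> 0) (at 0)"
    and t: "t \<in> {a + horizon..b - horizon}"
  shows "(\<Sum>j = 1..s div 2. A j *v (y (t - real j * h) - 2 *\<^sub>R y t + y (t + real j * h)))
    = h\<^sup>2 *\<^sub>R G (y t)"
proof -
  have horizon: "0 \<le> horizon"
    using h_pos by simp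
  define z where "z u = y (max a (min b u))" for u
  have z_eq: "z u = y u" if "u \<in> {a..b}" for u
    using that by (simp add: z_def)
  have "a \<le> b"
    using ab horizon by linarith
  then have z: "continuous_on UNIV z"
    unfolding z_def using y by (rule continuous_on_clamp)
  have "residual z t = 0"
  proof (rule fundamental_lemma_calculus_of_variations
      [where \<alpha> = "a + horizon" and \<beta> = "b - horizon" and \<delta> = 1 and \<psi> = bump])
    fix m e :: real and v :: "real^'n"
    assume me: "a + horizon \<le> m - e" "m + e \<le> b - horizon" "0 < e"
    define dy where "dy t = bump m e t *\<^sub>R v" for t
    have support: "dy u = 0" if "u \<notin> {m - e..m + e}" for u
      using that \<open>0 < e\<close> by (auto simp: dy_def bump_eq_0)
    have dy_cont: "continuous_on UNIV dy"
      unfolding dy_def by (intro smooth_fun_imp_continuous smooth_fun_scaleR smooth_fun_bump)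
    have "{t. dy t \<noteq> 0} \<subseteq> {m - e..m + e}"
      using support by blast
    then have "{t. dy t \<noteq> 0} \<subseteq> {a + horizon..b - horizon}"
      using me by auto
    then have "((\<lambda>\<epsilon>. (S_interval s A h U a b (\<lambda>t. y t + \<epsilon> *\<^sub>R dy t) - S_interval s A h U a b y) / \<epsilon>)
        \<longlongrightarrow> 0) (at 0)"
      unfolding dy_def by (intro stationary smooth_fun_scaleR smooth_fun_bump)
    moreover have "S_interval s A h U a b (\<lambda>t. y t + \<epsilon> *\<^sub>R dy t) - S_interval s A h U a b y
        = integral {m - e - horizon..m + e}
            (\<lambda>t. LDelta s A h U (\<lambda>t. z t + \<epsilon> *\<^sub>R dy t) t - LDelta s A h U z t)" for \<epsilon>
      using me by (intro S_interval_perturbation_localize z_eq z dy_cont support) auto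
    ultimately show "integral {m - e..m + e} (\<lambda>u. (residual z u \<bullet> v) * bump m e u) = 0"
      using \<open>0 < e\<close> unfolding dy_def by (intro bump_variation_stationary_imp_orthogonal[OF z]) auto
  qed (use ab t in \<open>auto intro: continuous_on_residual[OF z] smooth_fun_imp_continuous[OF smooth_fun_bump]
      bump_nonneg bump_pos_center\<close>)
  moreover have "residual z t = residual y t"
    using t horizon by (intro residual_cong) (auto simp: z_eq)
  ultimately show ?thesis
    by (simp add: residual_eq_0_iff)
qed

end

theorem lemma2p1:
  fixes s :: nat and A :: "nat \<Rightarrow> real^'n^'n" and h :: real
    and U :: "real^'n \<Rightarrow> real" and G :: "real^'n \<Rightarrow> real^'n"
  assumes "even s"
    and "\<forall>j\<in>{1..s div 2}. transpose (A j) = A j"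
    and "h > 0"
    and "\<forall>x. (U has_derivative (\<lambda>v. G x \<bullet> v)) (at x)"
    and "continuous_on UNIV G"
  shows
   "(\<forall>T y. T > 0 \<and> (\<forall>t. y (t + T) = y t) \<and> continuous_on UNIV y \<and>
       (\<forall>dy. smooth_fun dy \<and> (\<forall>t. dy (t + T) = dy t) \<longrightarrow>
          ((\<lambda>e. (S_circle s A h U T (\<lambda>t. y t + e *\<^sub>R dy t) - S_circle s A h U T y) / e)
             \<longlongrightarrow> 0) (at 0))
     \<longrightarrow> (\<forall>t. (\<Sum>j = 1..s div 2. A j *v (y (t - real j * h) - 2 *\<^sub>R y t + y (t + real j * h)))
               = h^2 *\<^sub>R G (y t)))
  \<and> (\<forall>y. continuous_on UNIV y \<and>
       (\<forall>dy. smooth_fun dy \<and> bounded {t. dy t \<noteq> 0} \<longrightarrow>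
          ((\<lambda>e. S_line_diff s A h U y (\<lambda>t. y t + e *\<^sub>R dy t) / e) \<longlongrightarrow> 0) (at 0))
     \<longrightarrow> (\<forall>t. (\<Sum>j = 1..s div 2. A j *v (y (t - real j * h) - 2 *\<^sub>R y t + y (t + real j * h)))
               = h^2 *\<^sub>R G (y t)))
  \<and> (\<forall>a b y. a + real (s div 2) * h < b - real (s div 2) * h \<and> continuous_on {a..b} y \<and>
       (\<forall>dy. smooth_fun dy \<and> {t. dy t \<noteq> 0} \<subseteq> {a + real (s div 2) * h .. b - real (s div 2) * h} \<longrightarrow>
          ((\<lambda>e. (S_interval s A h U a b (\<lambda>t. y t + e *\<^sub>R dy t) - S_interval s A h U a b y) / e)
             \<longlongrightarrow> 0) (at 0))
     \<longrightarrow> (\<forall>t\<in>{a + real (s div 2) * h .. b - real (s div 2) * h}.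
            (\<Sum>j = 1..s div 2. A j *v (y (t - real j * h) - 2 *\<^sub>R y t + y (t + real j * h)))
               = h^2 *\<^sub>R G (y t)))"
proof -
  interpret discrete_lagrangian s A h U G
    using assms(2-5) by unfold_locales
  show ?thesis
    apply (intro conjI allI impI ballI; elim conjE)
    subgoal for T y t
      by (rule functional_equation_circle[where T = T]) auto
    subgoal for y t
      by (rule functional_equation_line) auto
    subgoal for a b y t
      by (rule functional_equation_interval[where a = a and b = b]) auto
    done
qed

end
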